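(* Let $f:\mathbb{R}^{n_0}\to\mathbb{R}^{n_m}$ be an $m$-layer ReLU network with weights $\mathbf{W}^{(k)}\in\mathbb{R}^{n_k\times n_{k-1}}$ and biases $\bm{b}^{(k)}\in\mathbb{R}^{n_k}$, $k\in[m]$, let $\bm{x}_0\in\mathbb{R}^{n_0}$, $p\in[1,\infty]$, $\epsilon>0$, and let $\bm{l}^{(k)},\bm{u}^{(k)}\in\mathbb{R}^{n_k}$, $k\in[m-1]$, be lower and upper bounds on the pre-ReLU activations valid on $B_p(\bm{x}_0,\epsilon)$. Let $f^U,f^L:\mathbb{R}^{n_0}\to\mathbb{R}^{n_m}$ be the functions defined below. Then for all $j\in[n_m]$ and all $\bm{x}\in B_p(\bm{x}_0,\epsilon)$, $$f^L_j(\bm{x})\le f_j(\bm{x})\le f^U_j(\bm{x}).$$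
   Context: Network: $\phi_0(\bm{x})=\bm{x}$; for $k\in[m-1]$, $\phi_k(\bm{x})=\sigma(\mathbf{W}^{(k)}\phi_{k-1}(\bm{x})+\bm{b}^{(k)})$ with $\sigma(\bm{y})=\max(\bm{y},\bm{0})$ elementwise; $f(\bm{x})=\mathbf{W}^{(m)}\phi_{m-1}(\bm{x})+\bm{b}^{(m)}$, $f_j$ its $j$-th coordinate. $B_p(\bm{x}_0,\epsilon)=\{\bm{x}:\|\bm{x}-\bm{x}_0\|_p\le\epsilon\}$. Standing assumption: for each $k\in[m-1]$, $r\in[n_k]$, $\bm{l}^{(k)}_r\le\bm{u}^{(k)}_r$ and $\bm{l}^{(k)}_r\le \mathbf{W}^{(k)}_{r,:}\phi_{k-1}(\bm{x})+\bm{b}^{(k)}_r\le\bm{u}^{(k)}_r$ for all $\bm{x}\in B_p(\bm{x}_0,\epsilon)$. Index sets: $\mathcal{I}^+_k=\{r\in[n_k]:\bm{u}^{(k)}_r\ge\bm{l}^{(k)}_r\ge0\}$, $\mathcal{I}^-_k=\{r:\bm{l}^{(k)}_r\le\bm{u}^{(k)}_r\le 0\}$, $\mathcal{I}_k=\{r:\bm{l}^{(k)}_r<0<\bm{u}^{(k)}_r\}$. Let $\mathbf{D}^{(0)}=I_{n_0}$ and for $k\in[m-1]$ let $\mathbf{D}^{(k)}$ be the $n_k\times n_k$ diagonal matrix with $\mathbf{D}^{(k)}_{r,r}=\frac{\bm{u}^{(k)}_r}{\bm{u}^{(k)}_r-\bm{l}^{(k)}_r}$ if $r\in\mathcal{I}_k$,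 $1$ if $r\in\mathcal{I}^+_k$, $0$ if $r\in\mathcal{I}^-_k$. Let $\mathbf{A}^{(m-1)}=\mathbf{W}^{(m)}\mathbf{D}^{(m-1)}\in\mathbb{R}^{n_m\times n_{m-1}}$ and, for $k=m-1,m-2,\dots,1$, $\mathbf{A}^{(k-1)}=\mathbf{A}^{(k)}\mathbf{W}^{(k)}\mathbf{D}^{(k-1)}\in\mathbb{R}^{n_m\times n_{k-1}}$. For $k\in[m-1]$ define $\mathbf{T}^{(k)},\mathbf{H}^{(k)}\in\mathbb{R}^{n_k\times n_m}$ by $\mathbf{T}^{(k)}_{r,j}=\bm{l}^{(k)}_r$ if $r\in\mathcal{I}_k$ and $\mathbf{A}^{(k)}_{j,r}>0$, else $0$; $\mathbf{H}^{(k)}_{r,j}=\bm{l}^{(k)}_r$ if $r\in\mathcal{I}_k$ and $\mathbf{A}^{(k)}_{j,r}<0$, else $0$. Then $f^U_j(\bm{x})=\mathbf{A}^{(0)}_{j,:}\bm{x}+\bm{b}^{(m)}_j+\sum_{k=1}^{m-1}\mathbf{A}^{(k)}_{j,:}(\bm{b}^{(k)}-\mathbf{T}^{(k)}_{:,j})$ and $f^L_j(\bm{x})=\mathbf{A}^{(0)}_{j,:}\bm{x}+\bm{b}^{(m)}_j+\sum_{k=1}^{m-1}\mathbf{A}^{(k)}_{j,:}(\bm{b}^{(k)}-\mathbf{H}^{(k)}_{:,j})$. *)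

theory Defs
  imports "HOL-Analysis.Analysis"
begin

text \<open>Layer widths are given by n :: nat \<Rightarrow> nat (n 0 = input dim, n m = output dim).
Vectors in R^(n k) are functions nat \<Rightarrow> real, only coordinates r < n k matter (0-based indices).
W k r c is the (r,c) entry of W^(k), b k r the r-th entry of b^(k), for k = 1..m.\<close>

definition pnorm :: "ereal \<Rightarrow> nat \<Rightarrow> (nat \<Rightarrow> real) \<Rightarrow> real" where
  "pnorm p d x =
     (if p = \<infinity> then (if d = 0 then 0 else Max ((\<lambda>i. \<bar>x i\<bar>) ` {..<d}))
      else (\<Sum>i<d. \<bar>x i\<bar> powr real_of_ereal p) powr (1 / real_of_ereal p))"

definition pball :: "ereal \<Rightarrow> nat \<Rightarrow> (nat \<Rightarrow> real) \<Rightarrow> real \<Rightarrow> (nat \<Rightarrow> real) set" where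
  "pball p d x0 eps = {x. pnorm p d (\<lambda>i. x i - x0 i) \<le> eps}"

fun phi :: "(nat \<Rightarrow> nat) \<Rightarrow> (nat \<Rightarrow> nat \<Rightarrow> nat \<Rightarrow> real) \<Rightarrow> (nat \<Rightarrow> nat \<Rightarrow> real)
            \<Rightarrow> nat \<Rightarrow> (nat \<Rightarrow> real) \<Rightarrow> nat \<Rightarrow> real" where
  "phi n W b 0 x = x"
| "phi n W b (Suc k) x =
     (\<lambda>r. max 0 ((\<Sum>c<n k. W (Suc k) r c * phi n W b k x c) + b (Suc k) r))"

definition preact :: "(nat \<Rightarrow> nat) \<Rightarrow> (nat \<Rightarrow> nat \<Rightarrow> nat \<Rightarrow> real) \<Rightarrow> (nat \<Rightarrow> nat \<Rightarrow> real)
            \<Rightarrow> nat \<Rightarrow> (nat \<Rightarrow> real) \<Rightarrow> nat \<Rightarrow> real" where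
  "preact n W b k x r = (\<Sum>c<n (k - 1). W k r c * phi n W b (k - 1) x c) + b k r"

definition net :: "(nat \<Rightarrow> nat) \<Rightarrow> (nat \<Rightarrow> nat \<Rightarrow> nat \<Rightarrow> real) \<Rightarrow> (nat \<Rightarrow> nat \<Rightarrow> real)
            \<Rightarrow> nat \<Rightarrow> (nat \<Rightarrow> real) \<Rightarrow> nat \<Rightarrow> real" where
  "net n W b m x j = preact n W b m x j"

text \<open>Diagonal entries of D^(k); D^(0) = I. Index sets are tested in the order I_k, I_k^+, I_k^-.\<close>
definition Dd :: "(nat \<Rightarrow> nat \<Rightarrow> real) \<Rightarrow> (nat \<Rightarrow> nat \<Rightarrow> real) \<Rightarrow> nat \<Rightarrow> nat \<Rightarrow> real" where
  "Dd l u k r =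
     (if k = 0 then 1
      else if l k r < 0 \<and> 0 < u k r then u k r / (u k r - l k r)
      else if 0 \<le> l k r then 1
      else 0)"

function Amat :: "(nat \<Rightarrow> nat) \<Rightarrow> (nat \<Rightarrow> nat \<Rightarrow> nat \<Rightarrow> real) \<Rightarrow> (nat \<Rightarrow> nat \<Rightarrow> real)
            \<Rightarrow> (nat \<Rightarrow> nat \<Rightarrow> real) \<Rightarrow> nat \<Rightarrow> nat \<Rightarrow> nat \<Rightarrow> nat \<Rightarrow> real" where
  "Amat n W l u m k =
     (if m - 1 \<le> k then (\<lambda>j r. W m j r * Dd l u (m - 1) r)
      else (\<lambda>j c. (\<Sum>r<n (Suc k). Amat n W l u m (Suc k) j r * W (Suc k) r c) * Dd l u k c))"
  by pat_completeness auto
termination by (relation "Wellfounded.measure (\<lambda>(n, W, l, u, m, k). m - k)") auto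

definition Tmat :: "(nat \<Rightarrow> nat) \<Rightarrow> (nat \<Rightarrow> nat \<Rightarrow> nat \<Rightarrow> real) \<Rightarrow> (nat \<Rightarrow> nat \<Rightarrow> real)
            \<Rightarrow> (nat \<Rightarrow> nat \<Rightarrow> real) \<Rightarrow> nat \<Rightarrow> nat \<Rightarrow> nat \<Rightarrow> nat \<Rightarrow> real" where
  "Tmat n W l u m k r j =
     (if l k r < 0 \<and> 0 < u k r \<and> Amat n W l u m k j r > 0 then l k r else 0)"

definition Hmat :: "(nat \<Rightarrow> nat) \<Rightarrow> (nat \<Rightarrow> nat \<Rightarrow> nat \<Rightarrow> real) \<Rightarrow> (nat \<Rightarrow> nat \<Rightarrow> real)
            \<Rightarrow> (nat \<Rightarrow> nat \<Rightarrow> real) \<Rightarrow> nat \<Rightarrow> nat \<Rightarrow> nat \<Rightarrow> nat \<Rightarrow> real" where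
  "Hmat n W l u m k r j =
     (if l k r < 0 \<and> 0 < u k r \<and> Amat n W l u m k j r < 0 then l k r else 0)"

definition fU :: "(nat \<Rightarrow> nat) \<Rightarrow> (nat \<Rightarrow> nat \<Rightarrow> nat \<Rightarrow> real) \<Rightarrow> (nat \<Rightarrow> nat \<Rightarrow> real)
            \<Rightarrow> (nat \<Rightarrow> nat \<Rightarrow> real) \<Rightarrow> (nat \<Rightarrow> nat \<Rightarrow> real) \<Rightarrow> nat \<Rightarrow> (nat \<Rightarrow> real) \<Rightarrow> nat \<Rightarrow> real" where
  "fU n W b l u m x j =
     (\<Sum>c<n 0. Amat n W l u m 0 j c * x c) + b m j
     + (\<Sum>k\<in>{1..m-1}. \<Sum>r<n k. Amat n W l u m k j r * (b k r - Tmat n W l u m k r j))"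

definition fL :: "(nat \<Rightarrow> nat) \<Rightarrow> (nat \<Rightarrow> nat \<Rightarrow> nat \<Rightarrow> real) \<Rightarrow> (nat \<Rightarrow> nat \<Rightarrow> real)
            \<Rightarrow> (nat \<Rightarrow> nat \<Rightarrow> real) \<Rightarrow> (nat \<Rightarrow> nat \<Rightarrow> real) \<Rightarrow> nat \<Rightarrow> (nat \<Rightarrow> real) \<Rightarrow> nat \<Rightarrow> real" where
  "fL n W b l u m x j =
     (\<Sum>c<n 0. Amat n W l u m 0 j c * x c) + b m j
     + (\<Sum>k\<in>{1..m-1}. \<Sum>r<n k. Amat n W l u m k j r * (b k r - Hmat n W l u m k r j))"

end

theory Submission
  imports Defs
begin

text \<open>Split \<open>A(k) = G(k) D(k)\<close>, so \<open>G(m-1) = W(m)\<close> and \<open>G(k) = A(k+1) W(k+1)\<close>.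
Back-substitution from the output layer down: at stage \<open>k\<close> the network is written as
\<open>G(k) \<phi>\<^sub>k(x)\<close> plus constants, and passing to stage \<open>k - 1\<close> replaces each
\<open>G(k) relu(y)\<close> by the linear expression \<open>A(k) (y - T)\<close> (resp. \<open>A(k) (y - H)\<close>). On
\<open>[l, u]\<close> the ReLU lies between the lines \<open>u/(u-l) y\<close> and \<open>u/(u-l) (y - l)\<close>, and
\<open>T, H\<close> choose, by the sign of the coefficient, the line that keeps the inequality in the
right direction, so every stage can only increase (resp. decrease) the value. Stage \<open>m - 1\<close> is \<open>f(x)\<close> itself,
stage \<open>0\<close> is \<open>f\<^sup>U(x)\<close> (resp. \<open>f\<^sup>L(x)\<close>).\<close>

declare Amat.simps [simp del]

lemma relu_le_chord:
  fixes lo hi y :: real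
  assumes "lo < 0" "0 < hi" "lo \<le> y" "y \<le> hi"
  shows "max 0 y \<le> hi / (hi - lo) * (y - lo)"
proof -
  have "hi / (hi - lo) * (y - lo) - y = lo * (y - hi) / (hi - lo)"
    using assms by (simp add: field_simps)
  also have "\<dots> \<ge> 0"
    using assms by (intro divide_nonneg_pos) (auto intro: mult_nonpos_nonpos)
  finally show ?thesis
    using assms by (simp add: zero_le_mult_iff)
qed

lemma scaled_le_relu:
  fixes lo hi y :: real
  assumes "lo < 0" "0 < hi"
  shows "hi / (hi - lo) * y \<le> max 0 y"
proof (cases "y \<ge> 0")
  case True
  have "hi / (hi - lo) * y \<le> y"
    by (rule mult_left_le_one_le) (use assms True in auto)
  then show ?thesis by (metis max.coboundedI2)
next
  case False
  have "hi / (hi - lo) * y \<le> 0"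
    by (rule mult_nonneg_nonpos) (use assms False in auto)
  then show ?thesis by (metis max.cobounded1 order_trans)
qed

lemma relu_relaxation_upper:
  fixes g y lo hi :: real
  assumes "lo \<le> y" "y \<le> hi"
  defines "D \<equiv> (if lo < 0 \<and> 0 < hi then hi / (hi - lo) else if 0 \<le> lo then 1 else 0)"
  shows "g * max 0 y \<le> g * D * (y - (if lo < 0 \<and> 0 < hi \<and> g * D > 0 then lo else 0))"
proof (cases "lo < 0 \<and> 0 < hi")
  case unstable: True
  then have D: "D = hi / (hi - lo)" "D > 0" unfolding D_def by auto
  consider "g > 0" | "g < 0" | "g = 0" by linarith
  then show ?thesis
  proof cases
    case 1
    have "g * max 0 y \<le> g * (D * (y - lo))"
      using relu_le_chord[of lo hi y] unstable assms D 1 by (intro mult_left_mono) auto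
    moreover have "g * D > 0" using 1 D(2) by simp
    ultimately show ?thesis using unstable by (simp add: mult.assoc)
  next
    case 2
    have "g * max 0 y \<le> g * (D * y)"
      using scaled_le_relu[of lo hi y] unstable D 2 by (intro mult_left_mono_neg) auto
    moreover have "g * D < 0" using 2 D(2) by (simp add: mult_neg_pos)
    ultimately show ?thesis by (simp add: mult.assoc)
  qed simp
qed (use assms in auto)

lemma relu_relaxation_lower:
  fixes g y lo hi :: real
  assumes "lo \<le> y" "y \<le> hi"
  defines "D \<equiv> (if lo < 0 \<and> 0 < hi then hi / (hi - lo) else if 0 \<le> lo then 1 else 0)"
  shows "g * D * (y - (if lo < 0 \<and> 0 < hi \<and> g * D < 0 then lo else 0)) \<le> g * max 0 y"
  using relu_relaxation_upper[OF assms(1,2), of "- g"] unfolding D_def by simp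

lemma phi_eq_relu_preact: "0 < k \<Longrightarrow> phi n W b k x r = max 0 (preact n W b k x r)"
  by (cases k) (simp_all add: preact_def)

lemma Dd_pos_layer:
  "0 < k \<Longrightarrow> Dd l u k r =
     (if l k r < 0 \<and> 0 < u k r then u k r / (u k r - l k r) else if 0 \<le> l k r then 1 else 0)"
  by (simp add: Dd_def)

context
  fixes n :: "nat \<Rightarrow> nat" and W :: "nat \<Rightarrow> nat \<Rightarrow> nat \<Rightarrow> real" and b l u :: "nat \<Rightarrow> nat \<Rightarrow> real"
    and m :: nat
begin

definition Gmat :: "nat \<Rightarrow> nat \<Rightarrow> nat \<Rightarrow> real" where
  "Gmat k j c = (if m - 1 \<le> k then W m j c
      else (\<Sum>r<n (Suc k). Amat n W l u m (Suc k) j r * W (Suc k) r c))"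

lemma Amat_eq_Gmat_Dd: "k \<le> m - 1 \<Longrightarrow> Amat n W l u m k j c = Gmat k j c * Dd l u k c"
  by (subst Amat.simps) (auto simp: Gmat_def)

text \<open>Stage \<open>k\<close> of the back-substitution: \<open>\<phi>\<^sub>k(x)\<close> is kept exact, the ReLUs of layers
\<open>k + 1, \<dots>, m - 1\<close> are relaxed with offsets \<open>Off = T\<close> (upper bound) or \<open>Off = H\<close>
(lower bound).\<close>

definition backsub :: "(nat \<Rightarrow> nat \<Rightarrow> nat \<Rightarrow> real) \<Rightarrow> nat \<Rightarrow> (nat \<Rightarrow> real) \<Rightarrow> nat \<Rightarrow> real" where
  "backsub Off k x j = (\<Sum>c<n k. Gmat k j c * phi n W b k x c) + b m j
     + (\<Sum>i\<in>{Suc k..m-1}. \<Sum>r<n i. Amat n W l u m i j r * (b i r - Off i r j))"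

lemma backsub_top: "backsub Off (m - 1) x j = net n W b m x j"
  by (simp add: backsub_def Gmat_def net_def preact_def)

lemma backsub_bottom:
  "backsub (Tmat n W l u m) 0 x j = fU n W b l u m x j"
  "backsub (Hmat n W l u m) 0 x j = fL n W b l u m x j"
  using Amat_eq_Gmat_Dd[of 0] by (simp_all add: backsub_def fU_def fL_def Dd_def)

lemma Amat_preact_sum:
  assumes "Suc k \<le> m - 1"
  shows "(\<Sum>c<n (Suc k). Amat n W l u m (Suc k) j c * preact n W b (Suc k) x c)
     = (\<Sum>c<n k. Gmat k j c * phi n W b k x c)
       + (\<Sum>c<n (Suc k). Amat n W l u m (Suc k) j c * b (Suc k) c)"
  using assms
  by (simp add: preact_def Gmat_def distrib_left sum.distrib sum_distrib_left sum_distrib_right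
      mult.assoc sum.swap[where A = "{..<n (Suc k)}"])

lemma backsub_diff:
  assumes "Suc k \<le> m - 1"
  shows "backsub Off k x j - backsub Off (Suc k) x j
    = (\<Sum>c<n (Suc k). Amat n W l u m (Suc k) j c * (preact n W b (Suc k) x c - Off (Suc k) c j)
                       - Gmat (Suc k) j c * phi n W b (Suc k) x c)"
proof -
  have "{Suc k..m-1} = insert (Suc k) {Suc (Suc k)..m-1}" using assms by auto
  then show ?thesis
    using Amat_preact_sum[OF assms, of j x]
    by (simp add: backsub_def right_diff_distrib sum_subtractf)
qed

lemma Gmat_phi_le_upper_relaxation:
  assumes "0 < k" "k \<le> m - 1" "l k r \<le> preact n W b k x r" "preact n W b k x r \<le> u k r"
  shows "Gmat k j r * phi n W b k x r
    \<le> Amat n W l u m k j r * (preact n W b k x r - Tmat n W l u m k r j)"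
  using relu_relaxation_upper[OF assms(3,4), of "Gmat k j r"]
  unfolding phi_eq_relu_preact[OF assms(1)] Amat_eq_Gmat_Dd[OF assms(2)] Tmat_def
    Dd_pos_layer[OF assms(1), symmetric]
  by simp

lemma Gmat_phi_ge_lower_relaxation:
  assumes "0 < k" "k \<le> m - 1" "l k r \<le> preact n W b k x r" "preact n W b k x r \<le> u k r"
  shows "Amat n W l u m k j r * (preact n W b k x r - Hmat n W l u m k r j)
    \<le> Gmat k j r * phi n W b k x r"
  using relu_relaxation_lower[OF assms(3,4), of "Gmat k j r"]
  unfolding phi_eq_relu_preact[OF assms(1)] Amat_eq_Gmat_Dd[OF assms(2)] Hmat_def
    Dd_pos_layer[OF assms(1), symmetric]
  by simp

lemma backsub_bounds_net:
  assumes within: "\<And>i r. i \<in> {1..m-1} \<Longrightarrow> r < n i \<Longrightarrow>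
                     l i r \<le> preact n W b i x r \<and> preact n W b i x r \<le> u i r"
    and "k \<le> m - 1"
  shows "backsub (Hmat n W l u m) k x j \<le> net n W b m x j
       \<and> net n W b m x j \<le> backsub (Tmat n W l u m) k x j"
  using \<open>k \<le> m - 1\<close>
proof (induction k rule: inc_induct)
  case base
  show ?case unfolding backsub_top by simp
next
  case (step k)
  then have k: "Suc k \<le> m - 1" "Suc k \<in> {1..m-1}" by auto
  note relax = within[OF k(2)]
  have "0 \<le> backsub (Tmat n W l u m) k x j - backsub (Tmat n W l u m) (Suc k) x j"
    unfolding backsub_diff[OF k(1)]
    using Gmat_phi_le_upper_relaxation relax k by (intro sum_nonneg) (auto simp del: phi.simps)
  moreover have "backsub (Hmat n W l u m) k x j - backsub (Hmat n W l u m) (Suc k) x j \<le> 0"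
    unfolding backsub_diff[OF k(1)]
    using Gmat_phi_ge_lower_relaxation relax k by (intro sum_nonpos) (auto simp del: phi.simps)
  ultimately show ?case using step.IH by linarith
qed

end

theorem theorem3p5:
  fixes n :: "nat \<Rightarrow> nat" and W :: "nat \<Rightarrow> nat \<Rightarrow> nat \<Rightarrow> real" and b l u :: "nat \<Rightarrow> nat \<Rightarrow> real"
    and m :: nat and x0 :: "nat \<Rightarrow> real" and p :: ereal and eps :: real
  assumes m: "1 \<le> m"
    and p: "1 \<le> p"
    and eps: "0 < eps"
    and lu: "\<And>k r. k \<in> {1..m-1} \<Longrightarrow> r < n k \<Longrightarrow> l k r \<le> u k r"
    and bounds: "\<And>k r x. k \<in> {1..m-1} \<Longrightarrow> r < n k \<Longrightarrow> x \<in> pball p (n 0) x0 eps \<Longrightarrow>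
                   l k r \<le> preact n W b k x r \<and> preact n W b k x r \<le> u k r"
  shows "\<forall>j < n m. \<forall>x \<in> pball p (n 0) x0 eps.
           fL n W b l u m x j \<le> net n W b m x j \<and> net n W b m x j \<le> fU n W b l u m x j"
proof (intro allI impI ballI)
  fix j x
  assume "x \<in> pball p (n 0) x0 eps"
  then have "backsub n W b l u m (Hmat n W l u m) 0 x j \<le> net n W b m x j
           \<and> net n W b m x j \<le> backsub n W b l u m (Tmat n W l u m) 0 x j"
    using bounds by (intro backsub_bounds_net) auto
  then show "fL n W b l u m x j \<le> net n W b m x j \<and> net n W b m x j \<le> fU n W b l u m x j"
    by (simp add: backsub_bottom)
qed

end
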